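(* Let $1<p<\infty$ with $p\neq2$. For each $r\ge1$ let $T_r$ be the diagonal operator on $l^2([1,r])$ with diagonal entries $\frac1r,\frac2r,\ldots,\frac rr$. Let $\mathcal{Y}=\big(\bigoplus_{r\ge1}l^2([1,r])\big)_{l^p}$ and $T=\bigoplus_{r\ge1}T_r\in B(\mathcal{Y})$. Let $D$ be a (bounded) diagonal operator on $l^p$. Then there is no operator $L:\mathcal{Y}\to l^p$ such that $\inf\{\|Lx\|:\|x\|=1\}>0$ and $DL-LT$ is compact.
   Context: $l^2([1,r])$ is the $r$-dimensional Hilbert space $\ell^2(\{1,\ldots,r\})$; $(\bigoplus\cdot)_{l^p}$ denotes the $l^p$-direct sum. A diagonal operator on $l^p$ is $(x_1,x_2,\ldots)\mapsto(w_1x_1,w_2x_2,\ldots)$ with bounded scalars $w_i$. *)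

theory Defs
  imports "HOL-Analysis.Analysis"
begin

definition lp_space :: "real \<Rightarrow> (nat \<Rightarrow> complex) set" where
  "lp_space p = {x. summable (\<lambda>n. norm (x n) powr p)}"

definition lp_norm :: "real \<Rightarrow> (nat \<Rightarrow> complex) \<Rightarrow> real" where
  "lp_norm p x = (\<Sum>n. norm (x n) powr p) powr (1 / p)"

definition lp_dist :: "real \<Rightarrow> (nat \<Rightarrow> complex) \<Rightarrow> (nat \<Rightarrow> complex) \<Rightarrow> real" where
  "lp_dist p x y = lp_norm p (\<lambda>n. x n - y n)"

text \<open>Index set of the direct sum: the r-th summand l^2([1,r]) has coordinates (r,i), 1 <= i <= r.\<close>
definition Y_index :: "(nat \<times> nat) set" where
  "Y_index = {(r, i). 1 \<le> i \<and> i \<le> r}"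

definition Y_blocknorm :: "(nat \<times> nat \<Rightarrow> complex) \<Rightarrow> nat \<Rightarrow> real" where
  "Y_blocknorm x r = sqrt (\<Sum>i = 1..r. (norm (x (r, i)))\<^sup>2)"

definition Y_space :: "real \<Rightarrow> (nat \<times> nat \<Rightarrow> complex) set" where
  "Y_space p = {x. (\<forall>k. k \<notin> Y_index \<longrightarrow> x k = 0) \<and>
                   summable (\<lambda>r. Y_blocknorm x r powr p)}"

definition Y_norm :: "real \<Rightarrow> (nat \<times> nat \<Rightarrow> complex) \<Rightarrow> real" where
  "Y_norm p x = (\<Sum>r. Y_blocknorm x r powr p) powr (1 / p)"

definition T_op :: "(nat \<times> nat \<Rightarrow> complex) \<Rightarrow> (nat \<times> nat \<Rightarrow> complex)" where
  "T_op x = (\<lambda>(r, i). complex_of_real (real i / real r) * x (r, i))"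

definition diag_op :: "(nat \<Rightarrow> complex) \<Rightarrow> (nat \<Rightarrow> complex) \<Rightarrow> (nat \<Rightarrow> complex)" where
  "diag_op w x = (\<lambda>n. w n * x n)"

definition bounded_linear_Y_lp ::
  "real \<Rightarrow> ((nat \<times> nat \<Rightarrow> complex) \<Rightarrow> (nat \<Rightarrow> complex)) \<Rightarrow> bool" where
  "bounded_linear_Y_lp p L \<longleftrightarrow>
     (\<forall>x \<in> Y_space p. L x \<in> lp_space p) \<and>
     (\<forall>x \<in> Y_space p. \<forall>y \<in> Y_space p. L (\<lambda>k. x k + y k) = (\<lambda>n. L x n + L y n)) \<and>
     (\<forall>x \<in> Y_space p. \<forall>c. L (\<lambda>k. c * x k) = (\<lambda>n. c * L x n)) \<and>
     (\<exists>C. \<forall>x \<in> Y_space p. lp_norm p (L x) \<le> C * Y_norm p x)"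

definition compact_Y_lp ::
  "real \<Rightarrow> ((nat \<times> nat \<Rightarrow> complex) \<Rightarrow> (nat \<Rightarrow> complex)) \<Rightarrow> bool" where
  "compact_Y_lp p K \<longleftrightarrow>
     compactin (Metric_space.mtopology (lp_space p) (lp_dist p))
       ((Metric_space.mtopology (lp_space p) (lp_dist p)) closure_of
          (K ` {x \<in> Y_space p. Y_norm p x \<le> 1}))"

end

theory Submission
  imports Defs
begin

text \<open>Suppose L is bounded below by c > 0 and K = DL - LT is compact. For the unit vector e(r,i)
  of Y we have K e(r,i) = (w - i/r) L e(r,i). Unit vectors from distinct blocks span a copy of
  the unit vector basis of l^p, so their images under L tend to 0 coordinatewise, and compactness
  of K upgrades this to: the norm of K e(r,i) tends to 0 as the block index r grows. Hence in a
  far-out block r = m t the vectors v(j) = L e(r, j t), j = 1..m, are approximate eigenvectors of D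
  for the eigenvalues j/m, which are 1/m apart; they live essentially on disjoint sets of
  coordinates, so the norm of their sum is of order m powr (1/p). But the e(r, j t) lie in one
  l^2-block, so the same norm is also of order sqrt m, which for large m forces p = 2.\<close>

section \<open>The sequence spaces \<open>l\<^sup>p\<close>\<close>

lemma convex_on_powr_nonneg:
  assumes "1 \<le> p"
  shows "convex_on {0..} (\<lambda>x::real. x powr p)"
proof
  fix t x y :: real
  assume t: "0 < t" "t < 1" and xy: "x \<in> {0..}" "y \<in> {0..}" "x < y"
  show "((1 - t) *\<^sub>R x + t *\<^sub>R y) powr p \<le> (1 - t) * x powr p + t * y powr p"
  proof (cases "x = 0")
    case True
    have "(t * y) powr p = t powr p * y powr p"
      using t xy by (simp add: powr_mult)
    also have "\<dots> \<le> t * y powr p"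
      using powr_mono'[of 1 p t] assms t by (intro mult_right_mono) auto
    finally show ?thesis using True by simp
  next
    case False
    then show ?thesis
      using convex_onD[OF powr_convex[OF assms], of t x y] t xy by auto
  qed
qed (simp add: convex_real_interval)

lemma powr_powr_inverse:
  fixes x p :: real
  assumes "0 \<le> x" "0 < p"
  shows "(x powr p) powr (1 / p) = x" and "(x powr (1 / p)) powr p = x"
  using assms by (cases "x = 0"; simp add: powr_powr)+

lemma exists_nat_powr_gt:
  fixes a K :: real
  assumes "0 < a"
  shows "\<exists>N::nat. (1::nat) \<le> N \<and> K < real N powr a"
proof -
  define N where "N = nat \<lceil>(\<bar>K\<bar> + 1) powr (1 / a)\<rceil> + 1"
  have "(\<bar>K\<bar> + 1) powr (1 / a) < real N"
    unfolding N_def by linarith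
  then have "((\<bar>K\<bar> + 1) powr (1 / a)) powr a < real N powr a"
    using assms by (intro powr_less_mono2) auto
  then have "\<bar>K\<bar> + 1 < real N powr a"
    using assms by (simp add: powr_powr)
  then show ?thesis
    by (intro exI[of _ N]) (auto simp: N_def)
qed

lemma lp_norm_nonneg: "0 \<le> lp_norm p f"
  by (simp add: lp_norm_def)

lemma lp_norm_powr:
  assumes "0 < p" "f \<in> lp_space p"
  shows "lp_norm p f powr p = (\<Sum>n. norm (f n) powr p)"
  using assms by (simp add: lp_norm_def lp_space_def powr_powr_inverse suminf_nonneg)

lemma lp_space_mono:
  assumes "0 < p" "g \<in> lp_space p" "\<And>n. norm (f n) \<le> norm (g n)"
  shows "f \<in> lp_space p"
proof -
  have "norm (f n) powr p \<le> norm (g n) powr p" for n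
    using assms by (intro powr_mono2) auto
  then show ?thesis
    using assms(2) unfolding lp_space_def by (auto intro: summable_comparison_test')
qed

lemma lp_norm_mono:
  assumes "0 < p" "g \<in> lp_space p" "\<And>n. norm (f n) \<le> norm (g n)"
  shows "lp_norm p f \<le> lp_norm p g"
proof -
  have "summable (\<lambda>n. norm (f n) powr p)" "summable (\<lambda>n. norm (g n) powr p)"
    using lp_space_mono[OF assms] assms(2) by (auto simp: lp_space_def)
  then have "(\<Sum>n. norm (f n) powr p) \<le> (\<Sum>n. norm (g n) powr p)"
    using assms by (intro suminf_le powr_mono2) auto
  then show ?thesis
    using assms \<open>summable (\<lambda>n. norm (f n) powr p)\<close>
    unfolding lp_norm_def by (intro powr_mono2) (auto intro: suminf_nonneg)
qed

lemma lp_mult_const: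
  assumes "0 < p" "f \<in> lp_space p"
  shows "(\<lambda>n. c * f n) \<in> lp_space p" and "lp_norm p (\<lambda>n. c * f n) = norm c * lp_norm p f"
proof -
  have s: "summable (\<lambda>n. norm (f n) powr p)"
    using assms by (simp add: lp_space_def)
  have eq: "norm (c * f n) powr p = norm c powr p * norm (f n) powr p" for n
    by (simp add: norm_mult powr_mult)
  show "(\<lambda>n. c * f n) \<in> lp_space p"
    unfolding lp_space_def mem_Collect_eq eq by (rule summable_mult[OF s])
  have "(\<Sum>n. norm (c * f n) powr p) = norm c powr p * (\<Sum>n. norm (f n) powr p)"
    unfolding eq by (rule suminf_mult[OF s])
  then show "lp_norm p (\<lambda>n. c * f n) = norm c * lp_norm p f"
    using assms s unfolding lp_norm_def
    by (simp add: powr_mult powr_powr_inverse suminf_nonneg)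
qed

lemma norm_le_lp_norm:
  assumes "0 < p" "f \<in> lp_space p"
  shows "norm (f n) \<le> lp_norm p f"
proof -
  have "norm (f n) powr p \<le> (\<Sum>n. norm (f n) powr p)"
    using sum_le_suminf[of "\<lambda>n. norm (f n) powr p" "{n}"] assms by (auto simp: lp_space_def)
  then have "(norm (f n) powr p) powr (1/p) \<le> (\<Sum>n. norm (f n) powr p) powr (1/p)"
    using assms by (intro powr_mono2) auto
  then show ?thesis
    using assms by (simp add: lp_norm_def powr_powr_inverse)
qed

lemma lp_norm_eq_0_iff:
  assumes "0 < p" "f \<in> lp_space p"
  shows "lp_norm p f = 0 \<longleftrightarrow> f = (\<lambda>n. 0)"
  using norm_le_lp_norm[OF assms] by (auto simp: lp_norm_def)

lemma lp_space_zero: "(\<lambda>n. 0) \<in> lp_space p"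
  by (simp add: lp_space_def)

lemma lp_add:
  assumes p: "1 \<le> p" and f: "f \<in> lp_space p" and g: "g \<in> lp_space p"
  shows "(\<lambda>n. f n + g n) \<in> lp_space p"
    and "lp_norm p (\<lambda>n. f n + g n) \<le> lp_norm p f + lp_norm p g"
proof -
  have p0: "0 < p" using p by simp
  define A where "A = lp_norm p f"
  define B where "B = lp_norm p g"
  have "(\<lambda>n. f n + g n) \<in> lp_space p \<and> lp_norm p (\<lambda>n. f n + g n) \<le> A + B"
  proof (cases "A = 0 \<or> B = 0")
    case True
    then show ?thesis
      using f g lp_norm_eq_0_iff[OF p0] by (auto simp: A_def B_def lp_norm_nonneg)
  next
    case False
    then have AB: "0 < A" "0 < B"
      using lp_norm_nonneg by (auto simp: A_def B_def order.order_iff_strict)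
    define t where "t = B / (A + B)"
    have t: "0 \<le> t" "t \<le> 1" "(A + B) * (1 - t) = A" "(A + B) * t = B"
      using AB by (auto simp: t_def field_simps)
    have sf: "summable (\<lambda>n. norm (f n) powr p)" and sg: "summable (\<lambda>n. norm (g n) powr p)"
      using f g by (auto simp: lp_space_def)
    define h where "h n = (A + B) powr p *
      ((1 - t) * (norm (f n) / A) powr p + t * (norm (g n) / B) powr p)" for n
    \<comment> \<open>Convexity of \<open>s powr p\<close> at the normalised points \<open>|f n| / A\<close> and \<open>|g n| / B\<close>.\<close>
    have pointwise: "norm (f n + g n) powr p \<le> h n" for n
    proof -
      have split: "norm (f n) + norm (g n) = (A + B) * ((1 - t) * (norm (f n) / A) + t * (norm (g n) / B))"
        using AB by (simp add: distrib_left mult.assoc[symmetric] t(3,4))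
      have "norm (f n + g n) powr p \<le> (norm (f n) + norm (g n)) powr p"
        using p0 by (intro powr_mono2) (auto simp: norm_triangle_ineq)
      also have "\<dots> = (A + B) powr p * ((1 - t) * (norm (f n) / A) + t * (norm (g n) / B)) powr p"
        unfolding split using AB t by (simp add: powr_mult)
      also have "\<dots> \<le> h n"
        unfolding h_def using t AB
        by (intro mult_left_mono convex_onD[OF convex_on_powr_nonneg[OF p], simplified]) auto
      finally show ?thesis .
    qed
    have "h sums ((A + B) powr p * ((1 - t) * ((\<Sum>n. norm (f n) powr p) / A powr p)
                                  + t * ((\<Sum>n. norm (g n) powr p) / B powr p)))"
      unfolding h_def using AB
      by (simp add: powr_divide) (intro sums_mult sums_add sums_divide summable_sums sf sg)
    moreover have "(\<Sum>n. norm (f n) powr p) = A powr p" "(\<Sum>n. norm (g n) powr p) = B powr p"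
      using lp_norm_powr[OF p0] f g by (auto simp: A_def B_def)
    ultimately have h: "h sums (A + B) powr p"
      using AB t by simp
    have sfg: "summable (\<lambda>n. norm (f n + g n) powr p)"
      using h pointwise by (intro summable_comparison_test'[OF sums_summable[OF h]]) auto
    then have "(\<Sum>n. norm (f n + g n) powr p) \<le> (A + B) powr p"
      using suminf_le[OF pointwise sfg sums_summable[OF h]] sums_unique[OF h] by simp
    then have "lp_norm p (\<lambda>n. f n + g n) \<le> ((A + B) powr p) powr (1 / p)"
      unfolding lp_norm_def using p0 by (intro powr_mono2) (auto intro: suminf_nonneg sfg)
    then show ?thesis
      using sfg AB p0 by (simp add: lp_space_def powr_powr_inverse)
  qed
  then show "(\<lambda>n. f n + g n) \<in> lp_space p" "lp_norm p (\<lambda>n. f n + g n) \<le> lp_norm p f + lp_norm p g"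
    by (auto simp: A_def B_def)
qed

lemma lp_diff:
  assumes "1 \<le> p" "f \<in> lp_space p" "g \<in> lp_space p"
  shows "(\<lambda>n. f n - g n) \<in> lp_space p"
    and "lp_norm p (\<lambda>n. f n - g n) \<le> lp_norm p f + lp_norm p g"
  using lp_add[OF assms(1,2) lp_mult_const(1)[of p g "-1"]] lp_mult_const(2)[of p g "-1"] assms
  by auto

lemma lp_sum:
  assumes "1 \<le> p" "finite J" "\<And>j. j \<in> J \<Longrightarrow> F j \<in> lp_space p"
  shows "(\<lambda>n. \<Sum>j\<in>J. F j n) \<in> lp_space p"
    and "lp_norm p (\<lambda>n. \<Sum>j\<in>J. F j n) \<le> (\<Sum>j\<in>J. lp_norm p (F j))"
proof -
  have "(\<lambda>n. \<Sum>j\<in>J. F j n) \<in> lp_space p \<and> lp_norm p (\<lambda>n. \<Sum>j\<in>J. F j n) \<le> (\<Sum>j\<in>J. lp_norm p (F j))"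
    using assms(2,3)
  proof (induction J rule: finite_induct)
    case empty
    then show ?case by (simp add: lp_space_zero lp_norm_def)
  next
    case (insert j J)
    then have "F j \<in> lp_space p" "(\<lambda>n. \<Sum>j\<in>J. F j n) \<in> lp_space p" by auto
    from lp_add[OF assms(1) this] show ?case
      using insert by simp
  qed
  then show "(\<lambda>n. \<Sum>j\<in>J. F j n) \<in> lp_space p"
    "lp_norm p (\<lambda>n. \<Sum>j\<in>J. F j n) \<le> (\<Sum>j\<in>J. lp_norm p (F j))" by auto
qed

lemma norm_sum_powr_disjoint:
  assumes "finite J" "\<And>j j'. j \<in> J \<Longrightarrow> j' \<in> J \<Longrightarrow> j \<noteq> j' \<Longrightarrow> F j n = 0 \<or> F j' n = 0"
  shows "norm (\<Sum>j\<in>J. F j n) powr p = (\<Sum>j\<in>J. norm (F j n) powr p)"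
proof (cases "\<exists>j\<in>J. F j n \<noteq> 0")
  case True
  then obtain j where j: "j \<in> J" "F j n \<noteq> 0" by blast
  then have others: "F j' n = 0" if "j' \<in> J - {j}" for j'
    using assms(2)[of j' j] that by auto
  show ?thesis
    using assms(1) j others by (simp add: sum.remove[of J j])
qed simp

lemma lp_sum_disjoint:
  assumes p: "0 < p" and J: "finite J" and F: "\<And>j. j \<in> J \<Longrightarrow> F j \<in> lp_space p"
    and disjoint: "\<And>j j' n. j \<in> J \<Longrightarrow> j' \<in> J \<Longrightarrow> j \<noteq> j' \<Longrightarrow> F j n = 0 \<or> F j' n = 0"
  shows "(\<lambda>n. \<Sum>j\<in>J. F j n) \<in> lp_space p"
    and "lp_norm p (\<lambda>n. \<Sum>j\<in>J. F j n) powr p = (\<Sum>j\<in>J. lp_norm p (F j) powr p)"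
proof -
  have eq: "norm (\<Sum>j\<in>J. F j n) powr p = (\<Sum>j\<in>J. norm (F j n) powr p)" for n
    by (rule norm_sum_powr_disjoint[where F = F, OF J disjoint])
  have s: "summable (\<lambda>n. norm (F j n) powr p)" if "j \<in> J" for j
    using F[OF that] by (simp add: lp_space_def)
  show mem: "(\<lambda>n. \<Sum>j\<in>J. F j n) \<in> lp_space p"
    unfolding lp_space_def mem_Collect_eq eq by (intro summable_sum s)
  have "lp_norm p (\<lambda>n. \<Sum>j\<in>J. F j n) powr p = (\<Sum>n. \<Sum>j\<in>J. norm (F j n) powr p)"
    unfolding lp_norm_powr[OF p mem] eq ..
  also have "\<dots> = (\<Sum>j\<in>J. \<Sum>n. norm (F j n) powr p)"
    using s by (intro suminf_sum) auto
  also have "\<dots> = (\<Sum>j\<in>J. lp_norm p (F j) powr p)"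
    using lp_norm_powr[OF p F] by simp
  finally show "lp_norm p (\<lambda>n. \<Sum>j\<in>J. F j n) powr p = (\<Sum>j\<in>J. lp_norm p (F j) powr p)" .
qed

lemma lp_norm_sum_disjoint_bounds:
  assumes p: "0 < p" and J: "finite J" "J \<noteq> {}" and a: "0 \<le> a"
    and F: "\<And>j. j \<in> J \<Longrightarrow> F j \<in> lp_space p \<and> a \<le> lp_norm p (F j) \<and> lp_norm p (F j) \<le> b"
    and disjoint: "\<And>j j' n. j \<in> J \<Longrightarrow> j' \<in> J \<Longrightarrow> j \<noteq> j' \<Longrightarrow> F j n = 0 \<or> F j' n = 0"
  shows "a * card J powr (1 / p) \<le> lp_norm p (\<lambda>n. \<Sum>j\<in>J. F j n)"
    and "lp_norm p (\<lambda>n. \<Sum>j\<in>J. F j n) \<le> b * card J powr (1 / p)"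
proof -
  define s where "s = (\<Sum>j\<in>J. lp_norm p (F j) powr p)"
  have b: "0 \<le> b"
    using J(2) F a by (meson all_not_in_conv order_trans)
  have "lp_norm p (\<lambda>n. \<Sum>j\<in>J. F j n) = (lp_norm p (\<lambda>n. \<Sum>j\<in>J. F j n) powr p) powr (1 / p)"
    by (simp add: powr_powr_inverse lp_norm_nonneg p)
  also have "\<dots> = s powr (1 / p)"
    unfolding s_def using lp_sum_disjoint(2)[OF p J(1) _ disjoint] F by simp
  finally have norm_eq: "lp_norm p (\<lambda>n. \<Sum>j\<in>J. F j n) = s powr (1 / p)" .
  have "(\<Sum>j\<in>J. a powr p) \<le> s" "s \<le> (\<Sum>j\<in>J. b powr p)"
    unfolding s_def using F a p
    by (auto intro!: sum_mono powr_mono2 lp_norm_nonneg simp del: sum_constant)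
  then have "card J * a powr p \<le> s" "s \<le> card J * b powr p"
    by simp_all
  then have "(card J * a powr p) powr (1 / p) \<le> s powr (1 / p)"
    "s powr (1 / p) \<le> (card J * b powr p) powr (1 / p)"
    using p by (simp_all add: powr_mono2 s_def sum_nonneg)
  moreover have "(card J * a powr p) powr (1 / p) = a * card J powr (1 / p)"
    "(card J * b powr p) powr (1 / p) = b * card J powr (1 / p)"
    using p a b by (simp_all add: powr_mult powr_powr_inverse)
  ultimately show "a * card J powr (1 / p) \<le> lp_norm p (\<lambda>n. \<Sum>j\<in>J. F j n)"
    "lp_norm p (\<lambda>n. \<Sum>j\<in>J. F j n) \<le> b * card J powr (1 / p)"
    unfolding norm_eq by simp_all
qed

lemma lp_norm_outside_le:
  assumes p: "0 < p" and uv: "(\<lambda>n. u n * v n) \<in> lp_space p" and \<delta>: "0 < \<delta>"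
    and outside: "\<And>n. n \<notin> S \<Longrightarrow> \<delta> \<le> norm (u n)"
  shows "(\<lambda>n. if n \<in> S then 0 else v n) \<in> lp_space p"
    and "lp_norm p (\<lambda>n. if n \<in> S then 0 else v n) \<le> lp_norm p (\<lambda>n. u n * v n) / \<delta>"
proof -
  have le: "norm (if n \<in> S then 0 else v n) \<le> norm (of_real (1 / \<delta>) * (u n * v n))" for n
  proof (cases "n \<in> S")
    case False
    then have "\<delta> * norm (v n) \<le> norm (u n) * norm (v n)"
      using outside by (intro mult_right_mono) auto
    then have "norm (v n) \<le> norm (u n) * norm (v n) / \<delta>"
      using \<delta> by (simp add: field_simps)
    then show ?thesis
      using False \<delta> by (simp add: norm_mult norm_divide)
  qed simp
  show "(\<lambda>n. if n \<in> S then 0 else v n) \<in> lp_space p"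
    by (rule lp_space_mono[OF p lp_mult_const(1)[OF p uv] le])
  show "lp_norm p (\<lambda>n. if n \<in> S then 0 else v n) \<le> lp_norm p (\<lambda>n. u n * v n) / \<delta>"
    using lp_norm_mono[OF p lp_mult_const(1)[OF p uv] le] lp_mult_const(2)[OF p uv, of "of_real (1 / \<delta>)"] \<delta>
    by (simp add: norm_divide)
qed

lemma Metric_space_lp: "1 \<le> p \<Longrightarrow> Metric_space (lp_space p) (lp_dist p)"
proof unfold_locales
  fix x y z
  assume p: "1 \<le> p" and x: "x \<in> lp_space p" and y: "y \<in> lp_space p" and z: "z \<in> lp_space p"
  show "lp_dist p x y = 0 \<longleftrightarrow> x = y"
    using lp_norm_eq_0_iff[OF _ lp_diff(1)[OF p x y]] p by (auto simp: lp_dist_def fun_eq_iff)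
  show "lp_dist p x z \<le> lp_dist p x y + lp_dist p y z"
    using lp_add(2)[OF p lp_diff(1)[OF p x y] lp_diff(1)[OF p y z]] by (simp add: lp_dist_def)
qed (auto simp: lp_dist_def lp_norm_nonneg lp_norm_def norm_minus_commute)

lemma limitin_lp_imp_coordinate_tendsto:
  assumes p: "1 \<le> p"
    and lim: "limitin (Metric_space.mtopology (lp_space p) (lp_dist p)) f l sequentially"
  shows "(\<lambda>k. f k n) \<longlonglongrightarrow> l n"
proof -
  interpret lp: Metric_space "lp_space p" "lp_dist p"
    by (rule Metric_space_lp[OF p])
  have l: "l \<in> lp_space p" and f: "eventually (\<lambda>k. f k \<in> lp_space p) sequentially"
    and dist: "(\<lambda>k. lp_dist p (f k) l) \<longlonglongrightarrow> 0"
    using lim lp.limitin_metric_dist_null by auto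
  have "eventually (\<lambda>k. norm (f k n - l n) \<le> lp_dist p (f k) l) sequentially"
    using f
  proof eventually_elim
    case (elim k)
    show ?case
      using norm_le_lp_norm[OF _ lp_diff(1)[OF p elim l]] p by (simp add: lp_dist_def)
  qed
  then have "(\<lambda>k. f k n - l n) \<longlonglongrightarrow> 0"
    by (rule Lim_null_comparison[OF _ dist])
  then show ?thesis
    by (simp add: LIM_zero_iff)
qed

lemma compactin_lp_coordinate_null_imp_null_subseq:
  assumes p: "1 \<le> p" and S: "compactin (Metric_space.mtopology (lp_space p) (lp_dist p)) S"
    and f: "range f \<subseteq> S" and coordinates: "\<And>n. (\<lambda>k. f k n) \<longlonglongrightarrow> 0"
  shows "\<exists>r. strict_mono r \<and> (\<lambda>k. lp_norm p (f (r k))) \<longlonglongrightarrow> 0"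
proof -
  interpret lp: Metric_space "lp_space p" "lp_dist p"
    by (rule Metric_space_lp[OF p])
  obtain l r where r: "strict_mono r" and lim: "limitin lp.mtopology (f \<circ> r) l sequentially"
    using S f unfolding lp.compactin_sequentially by blast
  have "l = (\<lambda>n. 0)"
  proof
    fix n
    have "(\<lambda>k. f (r k) n) \<longlonglongrightarrow> l n"
      using limitin_lp_imp_coordinate_tendsto[OF p lim] by simp
    moreover have "(\<lambda>k. f (r k) n) \<longlonglongrightarrow> 0"
      using LIMSEQ_subseq_LIMSEQ[OF coordinates r] by (simp add: comp_def)
    ultimately show "l n = 0"
      using LIMSEQ_unique by blast
  qed
  then have "(\<lambda>k. lp_dist p (f (r k)) (\<lambda>n. 0)) \<longlonglongrightarrow> 0"
    using lim by (simp add: lp.limitin_metric_dist_null comp_def)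
  then show ?thesis
    using r by (auto simp: lp_dist_def)
qed

section \<open>The direct sum \<open>Y\<close> and bounded operators on it\<close>

definition Y_vec :: "(nat \<times> nat) set \<Rightarrow> (nat \<times> nat \<Rightarrow> complex) \<Rightarrow> nat \<times> nat \<Rightarrow> complex" where
  "Y_vec P a = (\<lambda>k. if k \<in> P then a k else 0)"

definition Y_unit :: "nat \<times> nat \<Rightarrow> nat \<times> nat \<Rightarrow> complex" where
  "Y_unit q = Y_vec {q} (\<lambda>_. 1)"

lemma Y_vec_in_Y_space_and_norm:
  assumes "finite P" "P \<subseteq> Y_index"
  shows "Y_vec P a \<in> Y_space p"
    and "Y_norm p (Y_vec P a) = (\<Sum>r\<in>fst ` P. Y_blocknorm (Y_vec P a) r powr p) powr (1 / p)"
proof -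
  have "Y_blocknorm (Y_vec P a) r = 0" if "r \<notin> fst ` P" for r
  proof -
    have "Y_vec P a (r, i) = 0" for i
      using that by (force simp: Y_vec_def)
    then show ?thesis
      by (simp add: Y_blocknorm_def)
  qed
  then have sums: "(\<lambda>r. Y_blocknorm (Y_vec P a) r powr p)
      sums (\<Sum>r\<in>fst ` P. Y_blocknorm (Y_vec P a) r powr p)"
    using assms by (intro sums_finite) auto
  show "Y_vec P a \<in> Y_space p"
    using sums_summable[OF sums] assms(2) by (auto simp: Y_space_def Y_vec_def)
  show "Y_norm p (Y_vec P a) = (\<Sum>r\<in>fst ` P. Y_blocknorm (Y_vec P a) r powr p) powr (1 / p)"
    using sums_unique[OF sums] by (simp add: Y_norm_def)
qed

lemma Y_blocknorm_Y_vec_single: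
  assumes "inj_on fst P" "q \<in> P" "P \<subseteq> Y_index"
  shows "Y_blocknorm (Y_vec P a) (fst q) = norm (a q)"
proof -
  obtain r i where q: "q = (r, i)" "1 \<le> i" "i \<le> r"
    using assms(2,3) by (cases q) (auto simp: Y_index_def)
  have "(r, j) \<in> P \<longleftrightarrow> j = i" for j
    using assms(1,2) q(1) unfolding inj_on_def by force
  then have "(\<Sum>j = 1..r. (norm (Y_vec P a (r, j)))\<^sup>2) = (\<Sum>j = 1..r. if j = i then (norm (a q))\<^sup>2 else 0)"
    unfolding Y_vec_def q(1) by (intro sum.cong) auto
  also have "\<dots> = (norm (a q))\<^sup>2"
    using q by simp
  finally show ?thesis
    by (simp add: Y_blocknorm_def q(1))
qed

lemma Y_norm_Y_vec_row:
  assumes "0 < p" "I \<subseteq> {1..r}" "I \<noteq> {}"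
  shows "Y_vec ({r} \<times> I) (\<lambda>_. g) \<in> Y_space p"
    and "Y_norm p (Y_vec ({r} \<times> I) (\<lambda>_. g)) = sqrt (card I) * norm g"
proof -
  have fin: "finite ({r} \<times> I)" "{r} \<times> I \<subseteq> Y_index"
    using assms(2) finite_subset[OF assms(2)] by (auto simp: Y_index_def)
  then show "Y_vec ({r} \<times> I) (\<lambda>_. g) \<in> Y_space p"
    by (rule Y_vec_in_Y_space_and_norm)
  have "(\<Sum>j = 1..r. (norm (Y_vec ({r} \<times> I) (\<lambda>_. g) (r, j)))\<^sup>2)
      = (\<Sum>j = 1..r. if j \<in> I then (norm g)\<^sup>2 else 0)"
    by (intro sum.cong) (auto simp: Y_vec_def)
  also have "\<dots> = (\<Sum>j \<in> {1..r} \<inter> I. (norm g)\<^sup>2)"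
    by (rule sum.inter_restrict[symmetric]) simp
  also have "\<dots> = card I * (norm g)\<^sup>2"
    using assms(2) by (simp add: Int_absorb1)
  finally have "Y_blocknorm (Y_vec ({r} \<times> I) (\<lambda>_. g)) r = sqrt (card I) * norm g"
    by (simp add: Y_blocknorm_def real_sqrt_mult)
  moreover have "fst ` ({r} \<times> I) = {r}"
    using assms(3) by auto
  ultimately show "Y_norm p (Y_vec ({r} \<times> I) (\<lambda>_. g)) = sqrt (card I) * norm g"
    using Y_vec_in_Y_space_and_norm(2)[OF fin] assms(1) by (simp add: powr_powr_inverse)
qed

lemma Y_norm_Y_vec_distinct_blocks:
  assumes "0 < p" "finite P" "P \<subseteq> Y_index" "inj_on fst P" "\<And>q. q \<in> P \<Longrightarrow> norm (a q) = 1"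
  shows "Y_norm p (Y_vec P a) = card P powr (1 / p)"
proof -
  have "Y_blocknorm (Y_vec P a) r = 1" if "r \<in> fst ` P" for r
    using that Y_blocknorm_Y_vec_single[OF assms(4) _ assms(3)] assms(5) by force
  then have "(\<Sum>r\<in>fst ` P. Y_blocknorm (Y_vec P a) r powr p) = card (fst ` P)"
    by simp
  then show ?thesis
    using Y_vec_in_Y_space_and_norm(2)[OF assms(2,3)] card_image[OF assms(4)] by simp
qed

lemma Y_unit_in_Y_space_and_norm:
  assumes "0 < p" "q \<in> Y_index"
  shows "Y_unit q \<in> Y_space p" and "Y_norm p (Y_unit q) = 1"
  using Y_vec_in_Y_space_and_norm(1)[of "{q}"] Y_norm_Y_vec_distinct_blocks[of p "{q}"] assms
  by (simp_all add: Y_unit_def)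

lemma Y_space_zero: "(\<lambda>k. 0) \<in> Y_space p"
  using Y_vec_in_Y_space_and_norm(1)[of "{}" "\<lambda>_. 0"] by (simp add: Y_vec_def)

lemma bounded_linear_Y_lp_mult:
  "bounded_linear_Y_lp p L \<Longrightarrow> x \<in> Y_space p \<Longrightarrow> L (\<lambda>k. c * x k) = (\<lambda>n. c * L x n)"
  by (simp add: bounded_linear_Y_lp_def)

lemma bounded_linear_Y_lp_add:
  "bounded_linear_Y_lp p L \<Longrightarrow> x \<in> Y_space p \<Longrightarrow> y \<in> Y_space p \<Longrightarrow>
     L (\<lambda>k. x k + y k) = (\<lambda>n. L x n + L y n)"
  by (simp add: bounded_linear_Y_lp_def)

lemma bounded_linear_Y_lp_in_lp_space:
  "bounded_linear_Y_lp p L \<Longrightarrow> x \<in> Y_space p \<Longrightarrow> L x \<in> lp_space p"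
  by (simp add: bounded_linear_Y_lp_def)

lemma bounded_linear_Y_lp_Y_vec:
  assumes L: "bounded_linear_Y_lp p L" and P: "finite P" "P \<subseteq> Y_index"
  shows "L (Y_vec P a) = (\<lambda>n. \<Sum>q\<in>P. a q * L (Y_unit q) n)"
  using P
proof (induction P rule: finite_induct)
  case empty
  then show ?case
    using bounded_linear_Y_lp_mult[OF L Y_space_zero, of 0] by (simp add: Y_vec_def)
next
  case (insert q P)
  have "Y_vec (insert q P) a = (\<lambda>k. Y_vec P a k + a q * Y_unit q k)"
    using insert(2) by (auto simp: Y_vec_def Y_unit_def)
  moreover have "Y_vec P a \<in> Y_space p" "Y_unit q \<in> Y_space p"
    using insert Y_vec_in_Y_space_and_norm(1) by (auto simp: Y_unit_def)
  moreover have "(\<lambda>k. a q * Y_unit q k) \<in> Y_space p"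
    using insert Y_vec_in_Y_space_and_norm(1)[of "{q}" "\<lambda>_. a q"]
    by (simp add: Y_unit_def Y_vec_def if_distrib cong: if_cong)
  ultimately show ?case
    using insert bounded_linear_Y_lp_add[OF L] bounded_linear_Y_lp_mult[OF L] by (simp add: add.commute)
qed

text \<open>Testing \<open>L\<close> on unit vectors from distinct blocks, with phases chosen so that their
  \<open>n\<close>-th coordinates add up in absolute value: the test vector has norm \<open>card P powr (1/p)\<close>.\<close>
lemma bounded_linear_Y_lp_coordinate_bound:
  fixes \<delta> :: real
  assumes p: "0 < p" and L: "bounded_linear_Y_lp p L"
    and C: "\<forall>x\<in>Y_space p. lp_norm p (L x) \<le> C * Y_norm p x"
    and P: "finite P" "P \<subseteq> Y_index" "inj_on fst P"
    and \<delta>: "\<And>q. q \<in> P \<Longrightarrow> \<delta> \<le> norm (L (Y_unit q) n)"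
  shows "card P * \<delta> \<le> C * card P powr (1 / p)"
proof -
  define v where "v q = L (Y_unit q) n" for q
  define a where "a q = (if v q = 0 then 1 else cnj (v q) / norm (v q))" for q
  have av: "a q * v q = norm (v q)" for q
    by (cases "v q = 0") (simp_all add: a_def complex_norm_square[symmetric] field_simps power2_eq_square)
  have a: "norm (a q) = 1" for q
    by (simp add: a_def norm_divide)
  define x where "x = Y_vec P a"
  have x: "x \<in> Y_space p" "Y_norm p x = card P powr (1 / p)"
    unfolding x_def using Y_vec_in_Y_space_and_norm(1)[OF P(1,2)]
      Y_norm_Y_vec_distinct_blocks[OF p P] a by auto
  have "L x n = of_real (\<Sum>q\<in>P. norm (v q))"
    using bounded_linear_Y_lp_Y_vec[OF L P(1,2), of a] av[unfolded v_def]
    by (simp add: x_def v_def of_real_sum)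
  then have Lx: "norm (L x n) = (\<Sum>q\<in>P. norm (v q))"
    by (simp only: norm_of_real) (simp add: sum_nonneg)
  have "card P * \<delta> \<le> (\<Sum>q\<in>P. norm (v q))"
    using \<delta> by (simp add: v_def sum_bounded_below)
  also have "\<dots> = norm (L x n)"
    by (rule Lx[symmetric])
  also have "\<dots> \<le> lp_norm p (L x)"
    using norm_le_lp_norm[OF p bounded_linear_Y_lp_in_lp_space[OF L x(1)]] .
  also have "\<dots> \<le> C * card P powr (1 / p)"
    using C x by auto
  finally show ?thesis .
qed

lemma bounded_linear_Y_lp_Y_unit_coordinate_tendsto_0:
  assumes p: "1 < p" and L: "bounded_linear_Y_lp p L"
    and C: "\<forall>x\<in>Y_space p. lp_norm p (L x) \<le> C * Y_norm p x"
    and qs: "\<And>k. qs k \<in> Y_index" "inj (fst \<circ> qs)"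
  shows "(\<lambda>k. L (Y_unit (qs k)) n) \<longlonglongrightarrow> 0"
proof (rule ccontr)
  assume "\<not> ?thesis"
  then obtain \<delta> where \<delta>: "0 < \<delta>" and frequently: "\<forall>N. \<exists>k\<ge>N. \<delta> \<le> norm (L (Y_unit (qs k)) n)"
    unfolding LIMSEQ_iff by (auto simp: not_less)
  define Q where "Q = {k. \<delta> \<le> norm (L (Y_unit (qs k)) n)}"
  have "infinite Q"
    unfolding Q_def infinite_nat_iff_unbounded_le using frequently by auto
  obtain N :: nat where N: "1 \<le> N" "C / \<delta> < real N powr (1 - 1 / p)"
    using exists_nat_powr_gt[of "1 - 1 / p" "C / \<delta>"] p by auto
  obtain F where F: "F \<subseteq> Q" "finite F" "card F = N"
    using infinite_arbitrarily_large[OF \<open>infinite Q\<close>] by blast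
  define P where "P = qs ` F"
  have inj: "inj_on (fst \<circ> qs) F"
    using qs(2) by (rule inj_on_subset) simp
  have "card P = N"
    using card_image[OF inj_on_imageI2[OF inj]] F(3) by (simp add: P_def)
  moreover have "card P * \<delta> \<le> C * card P powr (1 / p)"
  proof (rule bounded_linear_Y_lp_coordinate_bound)
    show "finite P" "P \<subseteq> Y_index" "inj_on fst P"
      using F(2) qs(1) inj_on_imageI[OF inj] by (auto simp: P_def)
    show "\<delta> \<le> norm (L (Y_unit q) n)" if "q \<in> P" for q
      using that F(1) by (auto simp: P_def Q_def)
  qed (use p L C in auto)
  ultimately have le: "real N * \<delta> \<le> C * real N powr (1 / p)"
    by simp
  have "real N powr (1 / p) * (real N powr (1 - 1 / p) * \<delta>) = real N * \<delta>"
    using N(1) by (simp add: powr_add[symmetric])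
  with le have "real N powr (1 / p) * (real N powr (1 - 1 / p) * \<delta>) \<le> real N powr (1 / p) * C"
    by (simp only: mult.commute[of C])
  then have "real N powr (1 - 1 / p) * \<delta> \<le> C"
    using N(1) by (simp add: mult_le_cancel_left_pos)
  then show False
    using N(2) \<delta> by (simp add: pos_divide_less_eq)
qed

definition T_eigenvalue :: "nat \<times> nat \<Rightarrow> complex" where
  "T_eigenvalue q = of_real (real (snd q) / real (fst q))"

lemma T_op_Y_unit: "T_op (Y_unit q) = (\<lambda>k. T_eigenvalue q * Y_unit q k)"
  by (auto simp: fun_eq_iff T_op_def Y_unit_def Y_vec_def T_eigenvalue_def split: prod.split)

lemma norm_T_eigenvalue_le_1: "q \<in> Y_index \<Longrightarrow> norm (T_eigenvalue q) \<le> 1"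
  by (auto simp: T_eigenvalue_def Y_index_def norm_divide)

lemma defect_Y_unit:
  assumes "0 < p" "bounded_linear_Y_lp p L" "q \<in> Y_index"
  shows "(\<lambda>n. diag_op w (L (Y_unit q)) n - L (T_op (Y_unit q)) n)
       = (\<lambda>n. (w n - T_eigenvalue q) * L (Y_unit q) n)"
  using bounded_linear_Y_lp_mult[OF assms(2) Y_unit_in_Y_space_and_norm(1)[OF assms(1,3)]]
  by (simp add: T_op_Y_unit diag_op_def algebra_simps)

lemma norm_diff_T_eigenvalue_le:
  assumes "\<forall>n. norm (w n) \<le> M" "q \<in> Y_index"
  shows "norm (w n - T_eigenvalue q) \<le> M + 1"
proof -
  have "norm (w n) \<le> M"
    using assms(1) by blast
  then show ?thesis
    using norm_triangle_ineq4[of "w n" "T_eigenvalue q"] norm_T_eigenvalue_le_1[OF assms(2)] by linarith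
qed

lemma defect_Y_unit_in_lp_space:
  assumes p: "0 < p" and L: "bounded_linear_Y_lp p L" and M: "\<forall>n. norm (w n) \<le> M"
    and q: "q \<in> Y_index"
  shows "(\<lambda>n. (w n - T_eigenvalue q) * L (Y_unit q) n) \<in> lp_space p"
proof -
  have "(\<lambda>n. of_real (M + 1) * L (Y_unit q) n) \<in> lp_space p"
    using lp_mult_const(1)[OF p bounded_linear_Y_lp_in_lp_space[OF L Y_unit_in_Y_space_and_norm(1)[OF p q]]] .
  moreover have "norm ((w n - T_eigenvalue q) * L (Y_unit q) n) \<le> norm (of_real (M + 1) * L (Y_unit q) n)" for n
  proof -
    have "0 \<le> M + 1"
      using M norm_ge_zero[of "w 0"] by (meson add_nonneg_nonneg order_trans zero_le_one)
    then show ?thesis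
      unfolding norm_mult norm_of_real
      using mult_right_mono[OF norm_diff_T_eigenvalue_le[OF M q] norm_ge_zero] by simp
  qed
  ultimately show ?thesis
    by (rule lp_space_mono[OF p])
qed

lemma defect_Y_unit_eventually_small:
  assumes p: "1 < p" and L: "bounded_linear_Y_lp p L"
    and C: "\<forall>x\<in>Y_space p. lp_norm p (L x) \<le> C * Y_norm p x"
    and M: "\<forall>n. norm (w n) \<le> M"
    and compact: "compact_Y_lp p (\<lambda>x n. diag_op w (L x) n - L (T_op x) n)" and \<epsilon>: "0 < \<epsilon>"
  shows "\<exists>R. \<forall>q\<in>Y_index. R \<le> fst q \<longrightarrow>
           lp_norm p (\<lambda>n. (w n - T_eigenvalue q) * L (Y_unit q) n) \<le> \<epsilon>"
proof (rule ccontr)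
  define K where "K q = (\<lambda>n. (w n - T_eigenvalue q) * L (Y_unit q) n)" for q
  assume "\<not> ?thesis"
  then have "\<forall>R. \<exists>q. q \<in> Y_index \<and> R \<le> fst q \<and> \<epsilon> < lp_norm p (K q)"
    unfolding K_def by (meson not_le)
  then obtain g where g: "\<And>R. g R \<in> Y_index \<and> R \<le> fst (g R) \<and> \<epsilon> < lp_norm p (K (g R))"
    by metis
  define qs where "qs k = ((\<lambda>q. g (Suc (fst q))) ^^ k) (g 0)" for k
  have qs: "qs k \<in> Y_index" "\<epsilon> < lp_norm p (K (qs k))" for k
    using g by (cases k; simp add: qs_def)+
  have "strict_mono (fst \<circ> qs)"
    by (rule strict_monoI_Suc) (use g in \<open>auto simp: qs_def Suc_le_lessD\<close>)
  then have inj: "inj (fst \<circ> qs)"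
    by (rule strict_mono_imp_inj_on)
  have coordinates: "(\<lambda>k. K (qs k) n) \<longlonglongrightarrow> 0" for n
  proof (rule Lim_null_comparison)
    show "\<forall>\<^sub>F k in sequentially. norm (K (qs k) n) \<le> (M + 1) * norm (L (Y_unit (qs k)) n)"
      using norm_diff_T_eigenvalue_le[OF M qs(1)]
      by (intro always_eventually allI) (simp add: K_def norm_mult mult_right_mono)
    show "(\<lambda>k. (M + 1) * norm (L (Y_unit (qs k)) n)) \<longlonglongrightarrow> 0"
      using bounded_linear_Y_lp_Y_unit_coordinate_tendsto_0[OF p L C qs(1) inj]
      by (intro tendsto_mult_right_zero tendsto_norm_zero)
  qed
  interpret lp: Metric_space "lp_space p" "lp_dist p"
    using Metric_space_lp p by simp
  have "K (qs k) \<in> lp.mtopology closure_of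
      ((\<lambda>x n. diag_op w (L x) n - L (T_op x) n) ` {x \<in> Y_space p. Y_norm p x \<le> 1})" for k
  proof (rule subsetD[OF closure_of_subset_Int], rule IntI)
    show "K (qs k) \<in> topspace lp.mtopology"
      using defect_Y_unit_in_lp_space[OF _ L M qs(1)] p by (simp add: K_def)
    show "K (qs k) \<in> (\<lambda>x n. diag_op w (L x) n - L (T_op x) n) ` {x \<in> Y_space p. Y_norm p x \<le> 1}"
      using defect_Y_unit[OF _ L qs(1)] Y_unit_in_Y_space_and_norm[OF _ qs(1)] p
      unfolding K_def by (intro image_eqI[of _ _ "Y_unit (qs k)"]) auto
  qed
  then obtain r where "(\<lambda>k. lp_norm p (K (qs (r k)))) \<longlonglongrightarrow> 0"
    using compactin_lp_coordinate_null_imp_null_subseq[of p _ "\<lambda>k. K (qs k)"] compact coordinates p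
    unfolding compact_Y_lp_def by fastforce
  then obtain k where "lp_norm p (K (qs (r k))) < \<epsilon>"
    using \<epsilon> by (metis LIMSEQ_D abs_of_nonneg lp_norm_nonneg real_norm_def diff_zero order.refl)
  then show False
    using qs(2)[of "r k"] by simp
qed

section \<open>Approximate eigenvectors in one block\<close>

lemma exists_nat_sqrt_powr_incomparable:
  fixes p K :: real
  assumes "0 < p" "p \<noteq> 2"
  shows "\<exists>m::nat. (1::nat) \<le> m \<and> (K * sqrt m < m powr (1 / p) \<or> K * m powr (1 / p) < sqrt m)"
proof -
  define d where "d = 1 / p - 1 / 2"
  have "d \<noteq> 0"
    using assms by (auto simp: d_def field_simps)
  then obtain m :: nat where m: "1 \<le> m" "K < m powr \<bar>d\<bar>"
    using exists_nat_powr_gt[of "\<bar>d\<bar>" K] by auto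
  have sqrt_pos: "0 < sqrt m" and powr_pos: "0 < m powr (1 / p)"
    using m(1) by auto
  have split: "m powr (1 / p) = sqrt m * m powr d"
    using m(1) by (simp add: d_def powr_half_sqrt[symmetric] powr_add[symmetric])
  show ?thesis
  proof (cases "0 < d")
    case True
    then have "K * sqrt m < m powr d * sqrt m"
      using m(2) sqrt_pos by (intro mult_strict_right_mono) auto
    then show ?thesis
      using m(1) split by (auto simp: mult.commute)
  next
    case False
    then have "sqrt m = m powr (1 / p) * m powr \<bar>d\<bar>"
      using split m(1) by (simp add: powr_minus field_simps)
    moreover have "K * m powr (1 / p) < m powr \<bar>d\<bar> * m powr (1 / p)"
      using m(2) powr_pos by (intro mult_strict_right_mono) auto
    ultimately show ?thesis
      using m(1) by (auto simp: mult.commute)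
  qed
qed

lemma not_near_distinct_grid_points:
  fixes z :: complex and m j j' :: nat
  assumes "0 < m" "j \<noteq> j'"
  shows "\<not> (norm (z - of_real (j / m)) < 1 / (2 * m) \<and> norm (z - of_real (j' / m)) < 1 / (2 * m))"
proof
  assume near: "norm (z - of_real (j / m)) < 1 / (2 * m) \<and> norm (z - of_real (j' / m)) < 1 / (2 * m)"
  have "1 / m \<le> \<bar>real j - real j'\<bar> / m"
    using assms by (intro divide_right_mono) auto
  also have "\<dots> = norm (of_real (j / m) - of_real (j' / m) :: complex)"
    by (simp only: of_real_diff[symmetric] norm_of_real diff_divide_distrib[symmetric] abs_divide)
  also have "\<dots> \<le> norm (z - of_real (j / m)) + norm (z - of_real (j' / m))"
    using norm_triangle_ineq4[of "z - of_real (j' / m)" "z - of_real (j / m)"] by simp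
  also have "\<dots> < 1 / m"
    using near by simp
  finally show False
    by simp
qed

text \<open>Each \<open>v j\<close> splits into its part on the coordinates where \<open>w\<close> is within \<open>1/(2m)\<close>
  of \<open>j/m\<close>, which are disjoint for distinct \<open>j\<close>, and a remainder that the eigenvector
  estimate makes small.\<close>
lemma lp_norm_sum_approx_eigenvectors:
  fixes v :: "nat \<Rightarrow> nat \<Rightarrow> complex" and m :: nat
  assumes p: "1 \<le> p" and m: "1 \<le> m" and c: "0 < c"
    and v: "\<And>j. j \<in> {1..m} \<Longrightarrow> v j \<in> lp_space p \<and> c \<le> lp_norm p (v j) \<and> lp_norm p (v j) \<le> C"
    and eigen: "\<And>j. j \<in> {1..m} \<Longrightarrow> (\<lambda>n. (w n - of_real (j / m)) * v j n) \<in> lp_space p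
                  \<and> lp_norm p (\<lambda>n. (w n - of_real (j / m)) * v j n) \<le> c / (4 * m\<^sup>2)"
  shows "c / 2 * m powr (1 / p) \<le> lp_norm p (\<lambda>n. \<Sum>j = 1..m. v j n) + c / 2"
    and "lp_norm p (\<lambda>n. \<Sum>j = 1..m. v j n) \<le> C * m powr (1 / p) + c / 2"
proof -
  have p0: "0 < p" and m0: "0 < real m"
    using p m by auto
  define near where "near j = {n. norm (w n - of_real (j / m)) < 1 / (2 * m)}" for j :: nat
  define a where "a j n = (if n \<in> near j then v j n else 0)" for j n
  define b where "b j n = (if n \<in> near j then 0 else v j n)" for j n
  have v_split: "v j n = a j n + b j n" for j n
    by (simp add: a_def b_def)
  have b: "b j \<in> lp_space p \<and> lp_norm p (b j) \<le> c / (2 * m)" if j: "j \<in> {1..m}" for j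
  proof -
    have outside: "1 / (2 * m) \<le> norm (w n - of_real (j / m))" if "n \<notin> near j" for n
      using that by (simp add: near_def)
    have "lp_norm p (b j) \<le> lp_norm p (\<lambda>n. (w n - of_real (j / m)) * v j n) / (1 / (2 * m))"
      using lp_norm_outside_le(2)[OF p0 conjunct1[OF eigen[OF j]] _ outside] m0
      by (simp add: b_def[abs_def])
    also have "\<dots> \<le> c / (4 * m\<^sup>2) / (1 / (2 * m))"
      using eigen[OF j] m0 by (intro divide_right_mono) auto
    also have "\<dots> = c / (2 * m)"
      using m0 by (simp add: power2_eq_square field_simps)
    finally show ?thesis
      using lp_norm_outside_le(1)[OF p0 conjunct1[OF eigen[OF j]] _ outside] m0
      by (simp add: b_def[abs_def])
  qed
  have a: "a j \<in> lp_space p \<and> c / 2 \<le> lp_norm p (a j) \<and> lp_norm p (a j) \<le> C" if j: "j \<in> {1..m}" for j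
  proof -
    have le: "norm (a j n) \<le> norm (v j n)" for n
      by (simp add: a_def)
    have v_lp: "v j \<in> lp_space p"
      using v[OF j] by blast
    have a_lp: "a j \<in> lp_space p"
      by (rule lp_space_mono[OF p0 v_lp le])
    have "v j = (\<lambda>n. a j n + b j n)"
      by (rule ext) (rule v_split)
    then have "c \<le> lp_norm p (a j) + c / (2 * m)"
      using lp_add(2)[OF p a_lp conjunct1[OF b[OF j]]] v[OF j] b[OF j] by simp
    moreover have "c / (2 * m) \<le> c / 2"
      using c m by (intro divide_left_mono) auto
    ultimately show ?thesis
      using a_lp lp_norm_mono[OF p0 v_lp le] v[OF j] by fastforce
  qed
  have disjoint: "a j n = 0 \<or> a j' n = 0" if "j \<in> {1..m}" "j' \<in> {1..m}" "j \<noteq> j'" for j j' n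
    using not_near_distinct_grid_points[OF _ that(3), of m "w n"] m by (auto simp: a_def near_def)
  define A where "A n = (\<Sum>j = 1..m. a j n)" for n
  define B where "B n = (\<Sum>j = 1..m. b j n)" for n
  have "c / 2 * card {1..m} powr (1 / p) \<le> lp_norm p A" "lp_norm p A \<le> C * card {1..m} powr (1 / p)"
    using lp_norm_sum_disjoint_bounds[where J = "{1..m}" and F = a, OF p0 _ _ _ a disjoint] c m by (auto simp: A_def[abs_def])
  then have A: "c / 2 * m powr (1 / p) \<le> lp_norm p A" "lp_norm p A \<le> C * m powr (1 / p)"
    by simp_all
  have A_lp: "A \<in> lp_space p"
    using lp_sum(1)[where J = "{1..m}" and F = a, OF p] a by (simp add: A_def[abs_def])
  have B: "B \<in> lp_space p" "lp_norm p B \<le> c / 2"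
  proof -
    show "B \<in> lp_space p"
      using lp_sum(1)[where J = "{1..m}" and F = b, OF p] b by (simp add: B_def[abs_def])
    have "lp_norm p B \<le> (\<Sum>j = 1..m. lp_norm p (b j))"
      using lp_sum(2)[where J = "{1..m}" and F = b, OF p] b by (simp add: B_def[abs_def])
    also have "\<dots> \<le> (\<Sum>j = 1..m. c / (2 * m))"
      using b by (intro sum_mono) auto
    also have "\<dots> = c / 2"
      using m0 by simp
    finally show "lp_norm p B \<le> c / 2" .
  qed
  have sum_v: "(\<lambda>n. \<Sum>j = 1..m. v j n) = (\<lambda>n. A n + B n)"
    by (simp add: A_def B_def v_split sum.distrib)
  have "lp_norm p A \<le> lp_norm p (\<lambda>n. \<Sum>j = 1..m. v j n) + lp_norm p B"
    unfolding sum_v using lp_diff(2)[OF p lp_add(1)[OF p A_lp B(1)] B(1)] by simp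
  moreover have "lp_norm p (\<lambda>n. \<Sum>j = 1..m. v j n) \<le> lp_norm p A + lp_norm p B"
    unfolding sum_v by (rule lp_add(2)[OF p A_lp B(1)])
  ultimately show "c / 2 * m powr (1 / p) \<le> lp_norm p (\<lambda>n. \<Sum>j = 1..m. v j n) + c / 2"
    "lp_norm p (\<lambda>n. \<Sum>j = 1..m. v j n) \<le> C * m powr (1 / p) + c / 2"
    using A B by linarith+
qed

lemma bounded_linear_Y_lp_row_sum_bounds:
  assumes p: "1 \<le> p" and L: "bounded_linear_Y_lp p L"
    and C: "\<forall>x\<in>Y_space p. lp_norm p (L x) \<le> C * Y_norm p x"
    and lower: "\<And>x. x \<in> Y_space p \<Longrightarrow> Y_norm p x = 1 \<Longrightarrow> c \<le> lp_norm p (L x)"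
    and I: "I \<subseteq> {1..r}" "I \<noteq> {}"
  shows "c * sqrt (card I) \<le> lp_norm p (\<lambda>n. \<Sum>i\<in>I. L (Y_unit (r, i)) n)"
    and "lp_norm p (\<lambda>n. \<Sum>i\<in>I. L (Y_unit (r, i)) n) \<le> C * sqrt (card I)"
proof -
  have p0: "0 < p"
    using p by simp
  have fin: "finite I" "finite ({r} \<times> I)" "{r} \<times> I \<subseteq> Y_index"
    using I finite_subset[OF I(1)] by (auto simp: Y_index_def)
  define s where "s = sqrt (card I)"
  have s: "0 < s"
    using fin(1) I(2) by (simp add: s_def card_gt_0_iff)
  define x where "x = Y_vec ({r} \<times> I) (\<lambda>_. of_real (1 / s))"
  have x: "x \<in> Y_space p" "Y_norm p x = 1"
    using Y_norm_Y_vec_row[OF p0 I] s by (simp_all add: x_def s_def norm_divide)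
  define V where "V n = (\<Sum>i\<in>I. L (Y_unit (r, i)) n)" for n
  have "L (Y_unit (r, i)) \<in> lp_space p" if "i \<in> I" for i
    using bounded_linear_Y_lp_in_lp_space[OF L Y_unit_in_Y_space_and_norm(1)[OF p0]] fin(3) that
    by blast
  then have V: "V \<in> lp_space p"
    unfolding V_def[abs_def] by (rule lp_sum(1)[OF p fin(1)])
  have "{r} \<times> I = Pair r ` I"
    by auto
  then have "L x = (\<lambda>n. of_real (1 / s) * V n)"
    using bounded_linear_Y_lp_Y_vec[OF L fin(2,3)]
    by (simp add: x_def V_def sum_distrib_left sum.reindex inj_on_def)
  then have LxV: "lp_norm p V = s * lp_norm p (L x)"
    using lp_mult_const(2)[OF p0 V, of "of_real (1 / s)"] s by (simp add: norm_divide)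
  have "c \<le> lp_norm p (L x)" "lp_norm p (L x) \<le> C"
    using lower[OF x] C x by auto
  then show "c * sqrt (card I) \<le> lp_norm p (\<lambda>n. \<Sum>i\<in>I. L (Y_unit (r, i)) n)"
    "lp_norm p (\<lambda>n. \<Sum>i\<in>I. L (Y_unit (r, i)) n) \<le> C * sqrt (card I)"
    using s unfolding V_def[symmetric] s_def[symmetric] LxV by (simp_all add: mult.commute)
qed

text \<open>Unit vectors in block \<open>m t\<close> at the positions \<open>j t\<close> have the eigenvalues \<open>j / m\<close> of \<open>T\<close>.\<close>
lemma lp_norm_block_sum_bounds:
  fixes m R :: nat
  assumes p: "1 < p" and L: "bounded_linear_Y_lp p L"
    and C: "\<forall>x\<in>Y_space p. lp_norm p (L x) \<le> C * Y_norm p x"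
    and c: "0 < c" and lower: "\<And>x. x \<in> Y_space p \<Longrightarrow> Y_norm p x = 1 \<Longrightarrow> c \<le> lp_norm p (L x)"
    and M: "\<forall>n. norm (w n) \<le> M" and m: "1 \<le> m"
    and R: "\<forall>q\<in>Y_index. R \<le> fst q \<longrightarrow>
              lp_norm p (\<lambda>n. (w n - T_eigenvalue q) * L (Y_unit q) n) \<le> c / (4 * m\<^sup>2)"
  defines "V \<equiv> lp_norm p (\<lambda>n. \<Sum>j = 1..m. L (Y_unit (m * Suc R, j * Suc R)) n)"
  shows "c / 2 * m powr (1 / p) \<le> V + c / 2" and "V \<le> C * m powr (1 / p) + c / 2"
    and "c * sqrt m \<le> V" and "V \<le> C * sqrt m"
proof -
  have p1: "1 \<le> p" and p0: "0 < p"
    using p by auto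
  define t where "t = Suc R"
  define v where "v j = L (Y_unit (m * t, j * t))" for j
  have t: "0 < t" "R \<le> m * t"
    using mult_le_mono1[OF m, of t] by (simp_all add: t_def)
  have q: "(m * t, j * t) \<in> Y_index" "T_eigenvalue (m * t, j * t) = of_real (j / m)"
    if "j \<in> {1..m}" for j
  proof -
    show "(m * t, j * t) \<in> Y_index"
      using that t(1) mult_le_mono1[of j m t] by (simp add: Y_index_def)
    show "T_eigenvalue (m * t, j * t) = of_real (j / m)"
      using t(1) by (simp add: T_eigenvalue_def)
  qed
  have v: "v j \<in> lp_space p \<and> c \<le> lp_norm p (v j) \<and> lp_norm p (v j) \<le> C" if "j \<in> {1..m}" for j
  proof -
    note e = Y_unit_in_Y_space_and_norm[OF p0 q(1)[OF that]]
    show ?thesis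
      using bounded_linear_Y_lp_in_lp_space[OF L e(1)] lower[OF e] bspec[OF C e(1)] e(2)
      by (simp add: v_def)
  qed
  have eigen: "(\<lambda>n. (w n - of_real (j / m)) * v j n) \<in> lp_space p
      \<and> lp_norm p (\<lambda>n. (w n - of_real (j / m)) * v j n) \<le> c / (4 * m\<^sup>2)" if "j \<in> {1..m}" for j
    using defect_Y_unit_in_lp_space[OF p0 L M q(1)[OF that]] R[rule_format, OF q(1)[OF that]]
      q(2)[OF that] t(2)
    by (simp add: v_def)
  show "c / 2 * m powr (1 / p) \<le> V + c / 2" "V \<le> C * m powr (1 / p) + c / 2"
    using lp_norm_sum_approx_eigenvectors[OF p1 m c v eigen] by (simp_all add: V_def v_def t_def)
  have "inj_on (\<lambda>j. j * t) {1..m}" "(\<lambda>j. j * t) ` {1..m} \<subseteq> {1..m * t}"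
    using q(1) t(1) by (auto simp: inj_on_def Y_index_def)
  then show "c * sqrt m \<le> V" "V \<le> C * sqrt m"
    using bounded_linear_Y_lp_row_sum_bounds[OF p1 L C lower, of "(\<lambda>j. j * t) ` {1..m}" "m * t"] m
    by (simp_all add: sum.reindex card_image V_def t_def)
qed

lemma compact_defect_of_bounded_below_imp_p_eq_2:
  assumes p: "1 < p" and L: "bounded_linear_Y_lp p L"
    and C: "\<forall>x\<in>Y_space p. lp_norm p (L x) \<le> C * Y_norm p x"
    and c: "0 < c" and lower: "\<And>x. x \<in> Y_space p \<Longrightarrow> Y_norm p x = 1 \<Longrightarrow> c \<le> lp_norm p (L x)"
    and M: "\<forall>n. norm (w n) \<le> M"
    and compact: "compact_Y_lp p (\<lambda>x n. diag_op w (L x) n - L (T_op x) n)"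
  shows "p = 2"
proof (rule ccontr)
  assume "p \<noteq> 2"
  have p0: "0 < p"
    using p by simp
  have e: "Y_unit (1, 1) \<in> Y_space p" "Y_norm p (Y_unit (1, 1)) = 1"
    using Y_unit_in_Y_space_and_norm[OF p0, of "(1, 1)"] by (simp_all add: Y_index_def)
  have "c \<le> lp_norm p (L (Y_unit (1, 1)))"
    by (rule lower[OF e])
  also have "\<dots> \<le> C"
    using bspec[OF C e(1)] e(2) by simp
  finally have "c \<le> C" .
  define K where "K = 2 * C / c + 1"
  obtain m :: nat where m: "1 \<le> m"
    and incomparable: "K * sqrt m < m powr (1 / p) \<or> K * m powr (1 / p) < sqrt m"
    using exists_nat_sqrt_powr_incomparable[OF p0 \<open>p \<noteq> 2\<close>] by blast
  have "0 < c / (4 * m\<^sup>2)"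
    using c m by simp
  then obtain R where R: "\<forall>q\<in>Y_index. R \<le> fst q \<longrightarrow>
      lp_norm p (\<lambda>n. (w n - T_eigenvalue q) * L (Y_unit q) n) \<le> c / (4 * m\<^sup>2)"
    using defect_Y_unit_eventually_small[OF p L C M compact] by blast
  note bounds = lp_norm_block_sum_bounds[OF p L C c lower M m R]
  have s: "1 \<le> sqrt m" and q: "1 \<le> m powr (1 / p)"
    using m p0 by (auto intro: ge_one_powr_ge_zero)
  have cK: "c * (K * x) = 2 * C * x + c * x" for x
    using c by (simp add: K_def field_simps)
  have "c / 2 \<le> c / 2 * sqrt m" "c / 2 \<le> c / 2 * m powr (1 / p)" "0 \<le> C * m powr (1 / p)"
    using s q c \<open>c \<le> C\<close> by simp_all
  then have "c * m powr (1 / p) \<le> c * (K * sqrt m)" "c * sqrt m \<le> c * (K * m powr (1 / p))"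
    unfolding cK using bounds by linarith+
  then show False
    using incomparable c by simp
qed

theorem lemma5p21:
  fixes p :: real and w :: "nat \<Rightarrow> complex"
  assumes "1 < p" and "p \<noteq> 2"
    and "\<exists>M. \<forall>n. norm (w n) \<le> M"
  shows "\<not> (\<exists>L. bounded_linear_Y_lp p L \<and>
              Inf {lp_norm p (L x) | x. x \<in> Y_space p \<and> Y_norm p x = 1} > 0 \<and>
              compact_Y_lp p (\<lambda>x n. diag_op w (L x) n - L (T_op x) n))"
proof
  assume "\<exists>L. bounded_linear_Y_lp p L \<and>
              Inf {lp_norm p (L x) | x. x \<in> Y_space p \<and> Y_norm p x = 1} > 0 \<and>
              compact_Y_lp p (\<lambda>x n. diag_op w (L x) n - L (T_op x) n)"
  then obtain L where L: "bounded_linear_Y_lp p L"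
    and c: "Inf {lp_norm p (L x) | x. x \<in> Y_space p \<and> Y_norm p x = 1} > 0"
    and compact: "compact_Y_lp p (\<lambda>x n. diag_op w (L x) n - L (T_op x) n)"
    by blast
  obtain C where C: "\<forall>x\<in>Y_space p. lp_norm p (L x) \<le> C * Y_norm p x"
    using L by (auto simp: bounded_linear_Y_lp_def)
  have lower: "Inf {lp_norm p (L x) | x. x \<in> Y_space p \<and> Y_norm p x = 1} \<le> lp_norm p (L x)"
    if "x \<in> Y_space p" "Y_norm p x = 1" for x
    using that by (intro cInf_lower bdd_belowI[of _ 0]) (auto simp: lp_norm_nonneg)
  obtain M where M: "\<forall>n. norm (w n) \<le> M"
    using assms(3) by blast
  have "p = 2"
    by (rule compact_defect_of_bounded_below_imp_p_eq_2[OF assms(1) L C c lower M compact])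
  with assms(2) show False
    by contradiction
qed

end
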